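(* Let $W$ satisfy the mixing assumptions in the context, and consider Algorithm DDS-F (described in the context) with all poll directions unit vectors and a forcing function $\rho:\mathbb{R}^+\to\mathbb{R}^+$, where the stepsizes $\alpha_i^{(k)}$ admit sequences $\{\alpha^{(k)}_{\min}\}$, $\{\alpha^{(k)}_{\max}\}$ such that (i) $\alpha^{(k)}_{\min}\le\alpha^{(k)}_i\le\alpha^{(k)}_{\max}$ for all $i,k$; (ii) $\sum_k(\alpha^{(k)}_{\max})^2<\infty$; (iii) $\sum_k\rho(\alpha^{(k)}_{\min})=\infty$. Then the iterates $\mathbf{x}^{(k)}=[x_1^{(k)};\dots;x_m^{(k)}]\in\mathbb{R}^{mn}$ satisfy $$\lim_{k\to\infty}\left\|\mathbf{x}^{(k)}-\widehat W\mathbf{x}^{(k)}\right\|=0.$$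
   Context: Setting: $m$ agents on an undirected connected graph $\mathcal{G}=(\{1,\dots,m\},\mathcal{E})$; $\mathcal{N}_i=\{j\neq i:(i,j)\in\mathcal{E}\}$. Mixing assumptions on $W=[w_{ij}]\in\mathbb{R}^{m\times m}$ with eigenvalues $\lambda_1(W)\ge\dots\ge\lambda_m(W)$: $W$ symmetric with nonnegative entries, $w_{ij}>0$ iff $i=j$ or $j\in\mathcal{N}_i$; $\lambda_1(W)=1$, $\lambda_2(W)<1$; $W\mathbf{1}=\mathbf{1}$; $-1<\lambda_m(W)\le0$. $\widehat W=W\otimes I_n$. Algorithm DDS-F (local functions $f_i:\mathbb{R}^n\to\mathbb{R}$, poll sets $D_i^{(k)}\subset\mathbb{R}^n$, stepsizes $\alpha_i^{(k)}>0$): start from $x_1^{(0)}=\dots=x_m^{(0)}$. At iteration $k$, each agent $i$ checks whether some $d\in D^{(k)}_i$ satisfies $f_i(x_i^{(k)}+\alpha_i^{(k)}d)\le f_i(x_i^{(k)})-\rho(\alpha_i^{(k)})$. If so, $x_i^{(k+1)}=\sum_{j\in\mathcal{N}_i\cup\{i\}}w_{ij}x_j^{(k)}+\alpha_i^{(k)}d$; otherwise $x_i^{(k+1)}=\sum_{j\in\mathcal{N}_i\cup\{i\}}w_{ij}x_j^{(k)}$. *)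

theory Defs
  imports "HOL-Analysis.Analysis" "Jordan_Normal_Form.Char_Poly"
begin

text \<open>For a real symmetric matrix the
  characteristic polynomial splits over the reals, so this list has length m and
  its (i-1)-th entry is lambda_i(W).\<close>
definition eigs_desc :: "real mat \<Rightarrow> real list" where
  "eigs_desc W = rev (sorted_list_of_multiset (proots (char_poly W)))"

text \<open>Mixing assumptions on W w.r.t. the undirected graph with edge set E on the
  vertices 0..m-1 (agent i of the paper is index i-1 here).\<close>
definition neighbors :: "(nat \<times> nat) set \<Rightarrow> nat \<Rightarrow> nat set" where
  "neighbors E i = {j. j \<noteq> i \<and> (i, j) \<in> E}"

definition undirected_connected_graph :: "nat \<Rightarrow> (nat \<times> nat) set \<Rightarrow> bool" where
  "undirected_connected_graph m E \<longleftrightarrow> 1 \<le> m \<and> E \<subseteq> {..<m} \<times> {..<m} \<and> sym E \<and>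
     (\<forall>i<m. \<forall>j<m. (i, j) \<in> E\<^sup>*)"

definition mixing_assumptions :: "nat \<Rightarrow> (nat \<times> nat) set \<Rightarrow> real mat \<Rightarrow> bool" where
  "mixing_assumptions m E W \<longleftrightarrow>
     W \<in> carrier_mat m m \<and> W = transpose_mat W \<and>
     (\<forall>i<m. \<forall>j<m. 0 \<le> W $$ (i, j)) \<and>
     (\<forall>i<m. \<forall>j<m. 0 < W $$ (i, j) \<longleftrightarrow> (i = j \<or> j \<in> neighbors E i)) \<and>
     eigs_desc W ! 0 = 1 \<and> eigs_desc W ! 1 < 1 \<and>
     (\<forall>i<m. (\<Sum>j<m. W $$ (i, j)) = 1) \<and>
     -1 < eigs_desc W ! (m - 1) \<and> eigs_desc W ! (m - 1) \<le> 0"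

definition forcing_function :: "(real \<Rightarrow> real) \<Rightarrow> bool" where
  "forcing_function \<rho> \<longleftrightarrow> (\<forall>t>0. 0 < \<rho> t) \<and> mono_on {0<..} \<rho> \<and>
     ((\<lambda>t. \<rho> t / t) \<longlongrightarrow> 0) (at_right 0)"

text \<open>Consensus step: sum over j in N_i u {i} of w_ij x_j (equivalently over all j<m,
  since w_ij = 0 off the graph).\<close>
definition mix :: "nat \<Rightarrow> (nat \<times> nat) set \<Rightarrow> real mat \<Rightarrow> (nat \<Rightarrow> real ^ 'n) \<Rightarrow> nat \<Rightarrow> real ^ 'n" where
  "mix m E W y i = (\<Sum>j\<in>insert i (neighbors E i). W $$ (i, j) *\<^sub>R y j)"

text \<open>The DDS-F iteration. x k i is agent i's iterate at iteration k; f i, D k i, alpha k i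
  are the local function, poll set and stepsize.\<close>
definition DDS_F :: "nat \<Rightarrow> (nat \<times> nat) set \<Rightarrow> real mat \<Rightarrow> (nat \<Rightarrow> real ^ 'n \<Rightarrow> real) \<Rightarrow>
    (nat \<Rightarrow> nat \<Rightarrow> (real ^ 'n) set) \<Rightarrow> (nat \<Rightarrow> nat \<Rightarrow> real) \<Rightarrow> (real \<Rightarrow> real) \<Rightarrow>
    (nat \<Rightarrow> nat \<Rightarrow> real ^ 'n) \<Rightarrow> bool" where
  "DDS_F m E W f D \<alpha> \<rho> x \<longleftrightarrow>
     (\<forall>i<m. \<forall>j<m. x 0 i = x 0 j) \<and>
     (\<forall>k. \<forall>i<m.
        (if (\<exists>d\<in>D k i. f i (x k i + \<alpha> k i *\<^sub>R d) \<le> f i (x k i) - \<rho> (\<alpha> k i))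
         then (\<exists>d\<in>D k i. f i (x k i + \<alpha> k i *\<^sub>R d) \<le> f i (x k i) - \<rho> (\<alpha> k i) \<and>
                 x (Suc k) i = mix m E W (x k) i + \<alpha> k i *\<^sub>R d)
         else x (Suc k) i = mix m E W (x k) i))"

text \<open>Euclidean norm of x - (W kron I_n) x for the stacked vector x = [x_1; ...; x_m].\<close>
definition consensus_err :: "nat \<Rightarrow> real mat \<Rightarrow> (nat \<Rightarrow> real ^ 'n) \<Rightarrow> real" where
  "consensus_err m W y = sqrt (\<Sum>i<m. (norm (y i - (\<Sum>j<m. W $$ (i, j) *\<^sub>R y j)))\<^sup>2)"

end

theory Submission
  imports Defs
begin

text \<open>Measure the disagreement of the agents coordinatewise by the spread max - min.
  Since W is row-stochastic with positive diagonal on a connected graph, some power W^N has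
  all entries at least some \<epsilon> > 0, and therefore shrinks the spread by the factor 1 - m\<epsilon>.
  A DDS-F step is the averaging step x \<mapsto> W x plus a displacement of length at most
  \<alpha>max k (the poll directions are unit vectors), so over N steps the spread obeys
  s(k+N) \<le> (1 - m\<epsilon>) s(k) + (a perturbation tending to 0), and hence tends to 0.\<close>

lemma affine_recursion_iterate:
  fixes s :: "nat \<Rightarrow> real"
  assumes rec: "\<And>k. K \<le> k \<Longrightarrow> s (k + N) \<le> q * s k + c * (1 - q)"
    and q: "0 \<le> q" and k: "K \<le> k"
  shows "s (k + j * N) - c \<le> q ^ j * (s k - c)"
proof (induction j)
  case 0
  then show ?case by simp
next
  case (Suc j)
  have "s (k + Suc j * N) - c = s ((k + j * N) + N) - c"
    by (simp add: algebra_simps)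
  also have "\<dots> \<le> q * (s (k + j * N) - c)"
    using rec[of "k + j * N"] k by (simp add: algebra_simps)
  also have "\<dots> \<le> q * (q ^ j * (s k - c))"
    using Suc q by (rule mult_left_mono)
  finally show ?case by simp
qed

lemma lagged_contraction_tendsto_zero:
  fixes s b :: "nat \<Rightarrow> real"
  assumes s: "\<And>k. 0 \<le> s k" and rec: "\<And>k. s (k + N) \<le> q * s k + b k"
    and b: "b \<longlonglongrightarrow> 0" and q: "0 \<le> q" "q < 1" and N: "0 < N"
  shows "s \<longlonglongrightarrow> 0"
proof (rule LIMSEQ_I)
  fix r :: real
  assume "0 < r"
  define e where "e = r / 2"
  have e: "0 < e" using \<open>0 < r\<close> by (simp add: e_def)
  obtain K where K: "\<And>k. K \<le> k \<Longrightarrow> b k < e * (1 - q)"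
    using order_tendstoD(2)[OF b, of "e * (1 - q)"] e q
    by (auto simp: eventually_sequentially)
  have rec': "s (k + N) \<le> q * s k + e * (1 - q)" if "K \<le> k" for k
    using rec[of k] K[OF that] by linarith
  define C where "C = Max ((\<lambda>i. s (K + i)) ` {..<N})"
  have C: "s (K + i) \<le> C" if "i < N" for i
    unfolding C_def using that by (intro Max_ge) auto
  obtain J where J: "q ^ J * C < e"
    using order_tendstoD(2)[OF tendsto_mult_left_zero[OF LIMSEQ_power_zero[of q]], of e C] e q
    by (auto simp: eventually_sequentially)
  show "\<exists>n0. \<forall>n\<ge>n0. norm (s n - 0) < r"
  proof (intro exI allI impI)
    fix n
    assume n: "K + J * N \<le> n"
    define i j where "i = (n - K) mod N" and "j = (n - K) div N"
    have n_eq: "n = (K + i) + j * N"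
      using div_mult_mod_eq[of "n - K" N] n unfolding i_def j_def by linarith
    have i: "i < N" using N by (simp add: i_def)
    have j: "J \<le> j"
      using div_le_mono[of "J * N" "n - K" N] n N unfolding j_def by simp
    have "0 \<le> C" using C[OF i] s order_trans by blast
    have "s n - e \<le> q ^ j * (s (K + i) - e)"
      using affine_recursion_iterate[where s=s and K=K and N=N and c=e, OF rec' q(1), of "K + i" j] n_eq
      by simp
    also have "\<dots> \<le> q ^ j * C"
      using C[OF i] e q by (intro mult_left_mono) auto
    also have "\<dots> \<le> q ^ J * C"
      using q j \<open>0 \<le> C\<close> by (intro mult_right_mono power_decreasing) auto
    finally show "norm (s n - 0) < r"
      using J s[of n] by (simp add: e_def)
  qed
qed

locale row_stochastic =
  fixes m :: nat and W :: "real mat"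
  assumes nonempty: "0 < m"
    and nonneg: "\<And>i j. i < m \<Longrightarrow> j < m \<Longrightarrow> 0 \<le> W $$ (i, j)"
    and row_sum: "\<And>i. i < m \<Longrightarrow> (\<Sum>j<m. W $$ (i, j)) = 1"
begin

definition wavg :: "(nat \<Rightarrow> real) \<Rightarrow> nat \<Rightarrow> real" where
  "wavg y i = (\<Sum>j<m. W $$ (i, j) * y j)"

definition spread :: "(nat \<Rightarrow> real) \<Rightarrow> real" where
  "spread y = Max (y ` {..<m}) - Min (y ` {..<m})"

lemma le_spread: "i < m \<Longrightarrow> l < m \<Longrightarrow> y i - y l \<le> spread y"
  unfolding spread_def by (intro diff_mono Max_ge Min_le) auto

lemma spread_nonneg: "0 \<le> spread y"
  using le_spread[of 0 0 y] nonempty by simp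

lemma spread_le:
  assumes "\<And>i l. i < m \<Longrightarrow> l < m \<Longrightarrow> y i - y l \<le> B"
  shows "spread y \<le> B"
proof -
  have "Max (y ` {..<m}) \<in> y ` {..<m}" "Min (y ` {..<m}) \<in> y ` {..<m}"
    using nonempty by (intro Max_in Min_in; auto)+
  then show ?thesis
    unfolding spread_def using assms by auto
qed

lemma wavg_le: "i < m \<Longrightarrow> (\<And>j. j < m \<Longrightarrow> y j \<le> M) \<Longrightarrow> wavg y i \<le> M"
  unfolding wavg_def
  using sum_mono[of "{..<m}" "\<lambda>j. W $$ (i, j) * y j" "\<lambda>j. W $$ (i, j) * M"]
  by (simp add: nonneg mult_left_mono row_sum flip: sum_distrib_right)

lemma wavg_ge: "i < m \<Longrightarrow> (\<And>j. j < m \<Longrightarrow> M \<le> y j) \<Longrightarrow> M \<le> wavg y i"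
  unfolding wavg_def
  using sum_mono[of "{..<m}" "\<lambda>j. W $$ (i, j) * M" "\<lambda>j. W $$ (i, j) * y j"]
  by (simp add: nonneg mult_left_mono row_sum flip: sum_distrib_right)

lemma abs_wavg_le: "i < m \<Longrightarrow> (\<And>j. j < m \<Longrightarrow> \<bar>y j\<bar> \<le> B) \<Longrightarrow> \<bar>wavg y i\<bar> \<le> B"
  using wavg_le[of i y B] wavg_ge[of i "-B" y] by (force simp: abs_le_iff)

lemma abs_diff_wavg_le_spread: "i < m \<Longrightarrow> \<bar>y i - wavg y i\<bar> \<le> spread y"
  using wavg_le[of i y "y i + spread y"] wavg_ge[of i "y i - spread y" y]
    le_spread[of i _ y] le_spread[of _ i y]
  by (force simp: abs_le_iff)

lemma wavg_diff: "wavg y i - wavg z i = wavg (\<lambda>j. y j - z j) i"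
  by (simp add: wavg_def right_diff_distrib flip: sum_subtractf)

fun Wpow :: "nat \<Rightarrow> nat \<Rightarrow> nat \<Rightarrow> real" where
  "Wpow 0 i j = (if i = j then 1 else 0)"
| "Wpow (Suc t) i j = (\<Sum>l<m. W $$ (i, l) * Wpow t l j)"

lemma Wpow_nonneg: "i < m \<Longrightarrow> j < m \<Longrightarrow> 0 \<le> Wpow t i j"
  by (induction t arbitrary: i) (auto intro!: sum_nonneg simp: nonneg)

lemma Wpow_row_sum: "i < m \<Longrightarrow> (\<Sum>j<m. Wpow t i j) = 1"
proof (induction t arbitrary: i)
  case 0
  then show ?case by simp
next
  case (Suc t)
  have "(\<Sum>j<m. Wpow (Suc t) i j) = (\<Sum>l<m. W $$ (i, l) * (\<Sum>j<m. Wpow t l j))"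
    by (simp add: sum_distrib_left) (rule sum.swap)
  also have "\<dots> = 1"
    using Suc by (simp add: row_sum)
  finally show ?case .
qed

lemma wavg_iterate: "i < m \<Longrightarrow> (wavg ^^ t) y i = (\<Sum>j<m. Wpow t i j * y j)"
proof (induction t arbitrary: i)
  case 0
  have "(\<Sum>j<m. Wpow 0 i j * y j) = (\<Sum>j<m. if i = j then y j else 0)"
    by (intro sum.cong) auto
  then show ?case using 0 by simp
next
  case (Suc t)
  have "(wavg ^^ Suc t) y i = (\<Sum>l<m. W $$ (i, l) * (\<Sum>j<m. Wpow t l j * y j))"
    using Suc by (simp add: wavg_def[of "(wavg ^^ t) y"])
  also have "\<dots> = (\<Sum>j<m. Wpow (Suc t) i j * y j)"
    by (simp add: sum_distrib_left sum_distrib_right mult.assoc) (rule sum.swap)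
  finally show ?case .
qed

text \<open>Dobrushin's argument: removing the common minorant \<epsilon> from every row leaves nonnegative
  weights of total mass 1 - m\<epsilon>, while the removed part contributes the same value \<sigma> to
  every entry of the image.\<close>
lemma spread_wavg_iterate_le:
  fixes \<epsilon> :: real
  assumes eps: "\<And>i j. i < m \<Longrightarrow> j < m \<Longrightarrow> \<epsilon> \<le> Wpow N i j"
  shows "spread ((wavg ^^ N) y) \<le> (1 - m * \<epsilon>) * spread y"
proof (rule spread_le)
  fix i l
  assume i: "i < m" and l: "l < m"
  define \<sigma> where "\<sigma> = \<epsilon> * (\<Sum>j<m. y j)"
  have split: "(wavg ^^ N) y p = (\<Sum>j<m. (Wpow N p j - \<epsilon>) * y j) + \<sigma>" if "p < m" for p
    using that by (simp add: \<sigma>_def wavg_iterate left_diff_distrib sum_subtractf sum_distrib_left)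
  have excess_sum: "(\<Sum>j<m. (Wpow N p j - \<epsilon>) * c) = (1 - m * \<epsilon>) * c" if "p < m" for p c
    using Wpow_row_sum[OF that] by (simp add: sum_subtractf flip: sum_distrib_right)
  have "(wavg ^^ N) y i \<le> (1 - m * \<epsilon>) * Max (y ` {..<m}) + \<sigma>"
    using split[OF i] excess_sum[OF i] eps[OF i]
      sum_mono[of "{..<m}" "\<lambda>j. (Wpow N i j - \<epsilon>) * y j" "\<lambda>j. (Wpow N i j - \<epsilon>) * Max (y ` {..<m})"]
    by (simp add: mult_left_mono)
  moreover have "(1 - m * \<epsilon>) * Min (y ` {..<m}) + \<sigma> \<le> (wavg ^^ N) y l"
    using split[OF l] excess_sum[OF l] eps[OF l]
      sum_mono[of "{..<m}" "\<lambda>j. (Wpow N l j - \<epsilon>) * Min (y ` {..<m})" "\<lambda>j. (Wpow N l j - \<epsilon>) * y j"]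
    by (simp add: mult_left_mono)
  ultimately show "(wavg ^^ N) y i - (wavg ^^ N) y l \<le> (1 - m * \<epsilon>) * spread y"
    by (simp add: spread_def right_diff_distrib)
qed

lemma perturbed_iterate_dist:
  assumes step: "\<And>k i. i < m \<Longrightarrow> \<bar>X (Suc k) i - wavg (X k) i\<bar> \<le> a k" and i: "i < m"
  shows "\<bar>X (k + t) i - (wavg ^^ t) (X k) i\<bar> \<le> (\<Sum>s<t. a (k + s))"
  using i
proof (induction t arbitrary: i)
  case 0
  then show ?case by simp
next
  case (Suc t)
  have "X (k + Suc t) i - (wavg ^^ Suc t) (X k) i =
      (X (Suc (k + t)) i - wavg (X (k + t)) i) + wavg (\<lambda>j. X (k + t) j - (wavg ^^ t) (X k) j) i"
    by (simp flip: wavg_diff)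
  moreover have "\<bar>wavg (\<lambda>j. X (k + t) j - (wavg ^^ t) (X k) j) i\<bar> \<le> (\<Sum>s<t. a (k + s))"
    using Suc by (intro abs_wavg_le) auto
  ultimately show ?case
    using step[OF Suc.prems, of "k + t"] by simp
qed

lemma spread_perturbed_tendsto_zero:
  fixes \<epsilon> :: real
  assumes step: "\<And>k i. i < m \<Longrightarrow> \<bar>X (Suc k) i - wavg (X k) i\<bar> \<le> a k"
    and a: "a \<longlonglongrightarrow> 0"
    and N: "0 < N" and \<epsilon>: "0 < \<epsilon>" and eps: "\<And>i j. i < m \<Longrightarrow> j < m \<Longrightarrow> \<epsilon> \<le> Wpow N i j"
  shows "(\<lambda>k. spread (X k)) \<longlonglongrightarrow> 0"
proof (rule lagged_contraction_tendsto_zero)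
  show "0 \<le> spread (X k)" for k
    by (rule spread_nonneg)
  have "m * \<epsilon> \<le> (\<Sum>j<m. Wpow N 0 j)"
    using sum_mono[of "{..<m}" "\<lambda>_. \<epsilon>" "Wpow N 0"] eps[of 0] nonempty by simp
  then show "0 \<le> 1 - m * \<epsilon>"
    using Wpow_row_sum[of 0 N] nonempty by simp
  show "1 - m * \<epsilon> < 1"
    using nonempty \<epsilon> by simp
  show "0 < N" by fact
  have "(\<lambda>k. \<Sum>s<N. a (k + s)) \<longlonglongrightarrow> (\<Sum>s<N. 0)"
    using a by (intro tendsto_sum LIMSEQ_ignore_initial_segment)
  then show "(\<lambda>k. 2 * (\<Sum>s<N. a (k + s))) \<longlonglongrightarrow> 0"
    using tendsto_mult_right_zero by simp
  show "spread (X (k + N)) \<le> (1 - m * \<epsilon>) * spread (X k) + 2 * (\<Sum>s<N. a (k + s))" for k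
  proof (rule spread_le)
    fix i l
    assume i: "i < m" and l: "l < m"
    have "(wavg ^^ N) (X k) i - (wavg ^^ N) (X k) l \<le> (1 - m * \<epsilon>) * spread (X k)"
      using le_spread[OF i l] spread_wavg_iterate_le[OF eps] by (rule order_trans)
    then show "X (k + N) i - X (k + N) l \<le> (1 - m * \<epsilon>) * spread (X k) + 2 * (\<Sum>s<N. a (k + s))"
      using perturbed_iterate_dist[where X=X and a=a, OF step i, of k N]
        perturbed_iterate_dist[where X=X and a=a, OF step l, of k N]
      by linarith
  qed
qed

lemma Wpow_pos_Suc:
  assumes "0 < W $$ (i, i)" "i < m" "j < m" "0 < Wpow t i j"
  shows "0 < Wpow (Suc t) i j"
proof -
  have "0 < W $$ (i, i) * Wpow t i j"
    using assms by simp
  also have "\<dots> \<le> (\<Sum>l<m. W $$ (i, l) * Wpow t l j)"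
    using assms nonneg Wpow_nonneg by (intro member_le_sum) auto
  finally show ?thesis by simp
qed

lemma consensus_err_le_spread:
  fixes y :: "nat \<Rightarrow> real ^ 'n"
  shows "consensus_err m W y \<le> sqrt m * (\<Sum>c\<in>UNIV. spread (\<lambda>i. y i $ c))"
proof -
  define S where "S = (\<Sum>c\<in>UNIV. spread (\<lambda>i. y i $ c))"
  have "norm (y i - (\<Sum>j<m. W $$ (i, j) *\<^sub>R y j)) \<le> S" if "i < m" for i
  proof -
    have "norm (y i - (\<Sum>j<m. W $$ (i, j) *\<^sub>R y j))
        \<le> (\<Sum>c\<in>UNIV. \<bar>(y i - (\<Sum>j<m. W $$ (i, j) *\<^sub>R y j)) $ c\<bar>)"
      by (rule norm_le_l1_cart)
    also have "\<dots> = (\<Sum>c\<in>UNIV. \<bar>y i $ c - wavg (\<lambda>l. y l $ c) i\<bar>)"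
      by (simp add: sum_component wavg_def)
    also have "\<dots> \<le> S"
      unfolding S_def using that by (intro sum_mono abs_diff_wavg_le_spread)
    finally show ?thesis .
  qed
  then have "(\<Sum>i<m. (norm (y i - (\<Sum>j<m. W $$ (i, j) *\<^sub>R y j)))\<^sup>2) \<le> (\<Sum>i<m. S\<^sup>2)"
    by (intro sum_mono power_mono) auto
  also have "\<dots> = (sqrt m * S)\<^sup>2"
    by (simp add: power_mult_distrib)
  finally have "consensus_err m W y \<le> sqrt ((sqrt m * S)\<^sup>2)"
    unfolding consensus_err_def by (rule real_sqrt_le_mono)
  also have "\<dots> = sqrt m * S"
    by (simp add: S_def sum_nonneg spread_nonneg)
  finally show ?thesis
    by (simp add: S_def)
qed

definition weight_graph :: "(nat \<times> nat) set" where
  "weight_graph = {(i, j). i < m \<and> j < m \<and> 0 < W $$ (i, j)}"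

context
  assumes diag_pos: "\<And>i. i < m \<Longrightarrow> 0 < W $$ (i, i)"
begin

lemma Wpow_pos_add: "i < m \<Longrightarrow> j < m \<Longrightarrow> 0 < Wpow t i j \<Longrightarrow> 0 < Wpow (t + d) i j"
  by (induction d) (use Wpow_pos_Suc diag_pos in \<open>simp_all del: Wpow.simps\<close>)

lemma Wpow_pos_of_path:
  assumes "(i, j) \<in> weight_graph\<^sup>*" "i < m" "j < m"
  shows "\<exists>t. 0 < Wpow t i j"
  using assms
proof (induction rule: converse_rtrancl_induct)
  case base
  then show ?case by (intro exI[of _ 0]) simp
next
  case (step i l)
  then have i: "i < m" "l < m" "0 < W $$ (i, l)"
    by (auto simp: weight_graph_def)
  obtain t where "0 < Wpow t l j"
    using step i by blast
  then have "0 < W $$ (i, l) * Wpow t l j"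
    using i by simp
  also have "\<dots> \<le> Wpow (Suc t) i j"
    using i step.prems nonneg Wpow_nonneg by (auto intro!: member_le_sum)
  finally show ?case by blast
qed

lemma Wpow_uniformly_positive:
  assumes connected: "\<And>i j. i < m \<Longrightarrow> j < m \<Longrightarrow> (i, j) \<in> weight_graph\<^sup>*"
  obtains N \<epsilon> where "0 < N" "0 < \<epsilon>" "\<And>i j. i < m \<Longrightarrow> j < m \<Longrightarrow> \<epsilon> \<le> Wpow N i j"
proof -
  obtain T where T: "\<And>i j. i < m \<Longrightarrow> j < m \<Longrightarrow> 0 < Wpow (T i j) i j"
    using Wpow_pos_of_path[OF connected] by metis
  obtain N where N: "(\<lambda>(i, j). T i j) ` ({..<m} \<times> {..<m}) \<subseteq> {..<N}"
    using finite_nat_bounded[of "(\<lambda>(i, j). T i j) ` ({..<m} \<times> {..<m})"] by blast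
  have pos: "0 < Wpow N i j" if "i < m" "j < m" for i j
    using Wpow_pos_add[OF that T[OF that], of "N - T i j"] N that by fastforce
  define \<epsilon> where "\<epsilon> = Min ((\<lambda>(i, j). Wpow N i j) ` ({..<m} \<times> {..<m}))"
  show ?thesis
  proof
    show "0 < N"
      using N nonempty by fastforce
    show "0 < \<epsilon>"
      unfolding \<epsilon>_def using pos nonempty by (subst Min_gr_iff) auto
    show "\<epsilon> \<le> Wpow N i j" if "i < m" "j < m" for i j
      unfolding \<epsilon>_def using that by (intro Min_le) auto
  qed
qed

lemma consensus_err_tendsto_zero:
  fixes y :: "nat \<Rightarrow> nat \<Rightarrow> real ^ 'n"
  assumes connected: "\<And>i j. i < m \<Longrightarrow> j < m \<Longrightarrow> (i, j) \<in> weight_graph\<^sup>*"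
    and step: "\<And>k i. i < m \<Longrightarrow> norm (y (Suc k) i - (\<Sum>j<m. W $$ (i, j) *\<^sub>R y k j)) \<le> a k"
    and a: "a \<longlonglongrightarrow> 0"
  shows "(\<lambda>k. consensus_err m W (y k)) \<longlonglongrightarrow> 0"
proof -
  obtain N \<epsilon> where N: "0 < N" "0 < \<epsilon>" "\<And>i j. i < m \<Longrightarrow> j < m \<Longrightarrow> \<epsilon> \<le> Wpow N i j"
    using Wpow_uniformly_positive[OF connected] by blast
  have coordinate_step: "\<bar>y (Suc k) i $ c - wavg (\<lambda>l. y k l $ c) i\<bar> \<le> a k" if "i < m" for k i c
    using component_le_norm_cart[of "y (Suc k) i - (\<Sum>j<m. W $$ (i, j) *\<^sub>R y k j)" c] step[OF that]
    by (simp add: sum_component wavg_def order_trans)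
  have spread_tendsto: "(\<lambda>k. spread (\<lambda>i. y k i $ c)) \<longlonglongrightarrow> 0" for c
    using spread_perturbed_tendsto_zero[where X="\<lambda>k i. y k i $ c", OF coordinate_step a N] .
  have "(\<lambda>k. \<Sum>c\<in>UNIV. spread (\<lambda>i. y k i $ c)) \<longlonglongrightarrow> (\<Sum>c\<in>(UNIV :: 'n set). 0)"
    by (rule tendsto_sum) (rule spread_tendsto)
  then have upper_tendsto: "(\<lambda>k. sqrt m * (\<Sum>c\<in>UNIV. spread (\<lambda>i. y k i $ c))) \<longlonglongrightarrow> 0"
    using tendsto_mult_right_zero by simp
  have lower: "\<forall>\<^sub>F k in sequentially. 0 \<le> consensus_err m W (y k)"
    by (simp add: consensus_err_def sum_nonneg)
  have upper: "\<forall>\<^sub>F k in sequentially.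
      consensus_err m W (y k) \<le> sqrt m * (\<Sum>c\<in>UNIV. spread (\<lambda>i. y k i $ c))"
    by (intro always_eventually allI consensus_err_le_spread)
  show ?thesis
    by (rule tendsto_sandwich[OF lower upper tendsto_const upper_tendsto])
qed

end

end

lemma mix_eq_sum:
  assumes "i < m" and "insert i (neighbors E i) \<subseteq> {..<m}"
    and "\<And>j. j < m \<Longrightarrow> j \<notin> insert i (neighbors E i) \<Longrightarrow> W $$ (i, j) = 0"
  shows "mix m E W y i = (\<Sum>j<m. W $$ (i, j) *\<^sub>R y j)"
  unfolding mix_def using assms by (intro sum.mono_neutral_left) auto

lemma DDS_F_step_norm_le:
  assumes iter: "DDS_F m E W f D \<alpha> \<rho> x" and i: "i < m"
    and unit: "\<And>d. d \<in> D k i \<Longrightarrow> norm d = 1" and step: "0 \<le> \<alpha> k i"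
  shows "norm (x (Suc k) i - mix m E W (x k) i) \<le> \<alpha> k i"
proof (cases "\<exists>d\<in>D k i. f i (x k i + \<alpha> k i *\<^sub>R d) \<le> f i (x k i) - \<rho> (\<alpha> k i)")
  case True
  then obtain d where "d \<in> D k i" "x (Suc k) i = mix m E W (x k) i + \<alpha> k i *\<^sub>R d"
    using iter i unfolding DDS_F_def by meson
  then show ?thesis
    using unit step by simp
next
  case False
  then have "x (Suc k) i = mix m E W (x k) i"
    using iter i unfolding DDS_F_def by meson
  then show ?thesis
    using step by simp
qed

theorem theorem2:
  fixes m :: nat and E :: "(nat \<times> nat) set" and W :: "real mat"
    and f :: "nat \<Rightarrow> real ^ 'n \<Rightarrow> real" and D :: "nat \<Rightarrow> nat \<Rightarrow> (real ^ 'n) set"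
    and \<alpha> :: "nat \<Rightarrow> nat \<Rightarrow> real" and \<rho> :: "real \<Rightarrow> real"
    and x :: "nat \<Rightarrow> nat \<Rightarrow> real ^ 'n"
    and \<alpha>min \<alpha>max :: "nat \<Rightarrow> real"
  assumes graph: "undirected_connected_graph m E"
    and mixing: "mixing_assumptions m E W"
    and forcing: "forcing_function \<rho>"
    and unit_dirs: "\<forall>k. \<forall>i<m. \<forall>d\<in>D k i. norm d = 1"
    and step_pos: "\<forall>k. \<forall>i<m. 0 < \<alpha> k i"
    and iter: "DDS_F m E W f D \<alpha> \<rho> x"
    and amin_pos: "\<forall>k. 0 < \<alpha>min k"
    and bounds: "\<forall>k. \<forall>i<m. \<alpha>min k \<le> \<alpha> k i \<and> \<alpha> k i \<le> \<alpha>max k"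
    and sq_summable: "summable (\<lambda>k. (\<alpha>max k)\<^sup>2)"
    and rho_divergent: "\<not> summable (\<lambda>k. \<rho> (\<alpha>min k))"
  shows "(\<lambda>k. consensus_err m W (x k)) \<longlonglongrightarrow> 0"
proof -
  have E: "E \<subseteq> {..<m} \<times> {..<m}" "\<And>i j. i < m \<Longrightarrow> j < m \<Longrightarrow> (i, j) \<in> E\<^sup>*"
    using graph unfolding undirected_connected_graph_def by auto
  have W_pos: "\<And>i j. i < m \<Longrightarrow> j < m \<Longrightarrow> 0 < W $$ (i, j) \<longleftrightarrow> i = j \<or> j \<in> neighbors E i"
    using mixing unfolding mixing_assumptions_def by auto
  interpret row_stochastic m W
    using mixing graph unfolding mixing_assumptions_def undirected_connected_graph_def
    by unfold_locales auto
  have "E \<subseteq> weight_graph"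
    using E(1) W_pos by (auto simp: weight_graph_def neighbors_def)
  then have connected: "(i, j) \<in> weight_graph\<^sup>*" if "i < m" "j < m" for i j
    using E(2)[OF that] rtrancl_mono by blast
  have mix: "mix m E W y i = (\<Sum>j<m. W $$ (i, j) *\<^sub>R y j)" if "i < m" for i and y :: "nat \<Rightarrow> real ^ 'n"
    using that E(1) W_pos nonneg by (intro mix_eq_sum) (auto simp: neighbors_def less_le)
  have "norm (x (Suc k) i - (\<Sum>j<m. W $$ (i, j) *\<^sub>R x k j)) \<le> \<alpha>max k" if "i < m" for k i
    using DDS_F_step_norm_le[OF iter that] unit_dirs step_pos bounds that
    by (fastforce simp: mix[OF that] less_imp_le intro: order_trans)
  moreover have "\<alpha>max \<longlonglongrightarrow> 0"
    using summable_LIMSEQ_zero[OF sq_summable] by simp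
  moreover have "0 < W $$ (i, i)" if "i < m" for i
    using W_pos that by simp
  ultimately show ?thesis
    using consensus_err_tendsto_zero connected by blast
qed

end
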